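(* Let $K$ be a field of characteristic $0$ and let $f(x)\in K[x,x^{-1}]$ be a non-constant Laurent polynomial. Then there exists a positive integer $N$ such that every element $c\in K$ can be written as $c=\epsilon_1 f(a_1)+\cdots+\epsilon_N f(a_N)$ with $a_1,\dots,a_N\in K^*$ and $\epsilon_1,\dots,\epsilon_N\in\{1,-1\}$. In particular, for $K=\mathbb{Q}$, $f$ satisfies the EWP.
   Context: A rational function $f\in\mathbb{Q}(x)$ satisfies the EWP if for some $N\ge1$ every rational number can be written as $\epsilon_1f(a_1)+\cdots+\epsilon_Nf(a_N)$ with $\epsilon_i\in\{1,-1\}$ and $a_i\in\mathbb{Q}$ not poles of $f$. *)

theory Defs
  imports Main
begin

text \<open>A Laurent polynomial f(x) in K[x,x^-1] is represented by its finitely supported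
  coefficient function c :: int => K, i.e. f(x) = sum over n of c n * x^n (n in Z).\<close>

definition laurent_poly :: "(int \<Rightarrow> 'a::zero) \<Rightarrow> bool" where
  "laurent_poly c \<longleftrightarrow> finite {n. c n \<noteq> 0}"

definition laurent_eval :: "(int \<Rightarrow> 'a::field) \<Rightarrow> 'a \<Rightarrow> 'a" where
  "laurent_eval c x = (\<Sum>n\<in>{n. c n \<noteq> 0}. c n * x powi n)"

definition laurent_nonconst :: "(int \<Rightarrow> 'a::zero) \<Rightarrow> bool" where
  "laurent_nonconst c \<longleftrightarrow> (\<exists>n. n \<noteq> 0 \<and> c n \<noteq> 0)"

end

theory Submission
  imports Defs "HOL-Computational_Algebra.Polynomial"
begin

text \<open>Write f(x) = \<Sum> c_n x^n. A signed sum \<Sum> \<epsilon>_j f(l_j x) of dilations replaces each c_n by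
  c_n times the signed power sum \<Sum> \<epsilon>_j l_j^n. Power sums are multiplicative under products of
  dilation lists, and the list 2^(\<plusminus>1) with sign +1 together with 2^|m| copies of 1 with sign -1
  has power sum 2^(\<plusminus>k) - 2^|m| at exponent k, vanishing only at k = m. So finitely many
  dilations turn f into a monomial C x^n with n \<noteq> 0, and after x \<mapsto> 1/x we may take n > 0.
  Iterated forward differences of C x^n, again signed sums of shifted values, give an affine
  function a x + b with a \<noteq> 0, and every y is a difference of two of its values.\<close>

definition signed_sum :: "('a \<Rightarrow> 'b::comm_ring_1) \<Rightarrow> ('b \<times> 'a) list \<Rightarrow> 'b" where
  "signed_sum f F = (\<Sum>(\<epsilon>, t)\<leftarrow>F. \<epsilon> * f t)"

definition pm_signs :: "('b::ring_1 \<times> 'a) list \<Rightarrow> bool" where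
  "pm_signs F \<longleftrightarrow> (\<forall>(\<epsilon>, _)\<in>set F. \<epsilon> = 1 \<or> \<epsilon> = -1)"

definition signed_bind :: "('b::times \<times> 'a) list \<Rightarrow> ('a \<Rightarrow> ('b \<times> 'c) list) \<Rightarrow> ('b \<times> 'c) list" where
  "signed_bind F G = concat (map (\<lambda>(\<epsilon>, x). map (apfst ((*) \<epsilon>)) (G x)) F)"

lemma signed_sum_Nil [simp]: "signed_sum f [] = 0"
  by (simp add: signed_sum_def)

lemma signed_sum_Cons [simp]: "signed_sum f ((\<epsilon>, t) # F) = \<epsilon> * f t + signed_sum f F"
  by (simp add: signed_sum_def)

lemma signed_sum_append [simp]: "signed_sum f (F @ G) = signed_sum f F + signed_sum f G"
  by (simp add: signed_sum_def)

lemma signed_sum_map_apsnd: "signed_sum f (map (apsnd g) F) = signed_sum (\<lambda>t. f (g t)) F"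
  by (induction F) auto

lemma signed_sum_map_negate: "signed_sum f (map (apfst uminus) F) = - signed_sum f F"
  by (induction F) auto

lemma signed_sum_mult_left: "signed_sum (\<lambda>t. a * f t) F = a * signed_sum f F"
  by (induction F) (auto simp: algebra_simps)

lemma signed_sum_mult_right: "signed_sum (\<lambda>t. f t * a) F = signed_sum f F * a"
  by (induction F) (auto simp: algebra_simps)

lemma signed_sum_sum:
  "signed_sum (\<lambda>t. \<Sum>n\<in>A. f n t) F = (\<Sum>n\<in>A. signed_sum (f n) F)"
  by (induction F) (auto simp: sum.distrib sum_distrib_left)

lemma signed_sum_signed_bind:
  "signed_sum f (signed_bind F G) = signed_sum (\<lambda>x. signed_sum f (G x)) F"
proof (induction F)
  case (Cons p F)
  have "signed_sum f (map (apfst ((*) \<epsilon>)) H) = \<epsilon> * signed_sum f H" for \<epsilon> H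
    by (induction H) (auto simp: algebra_simps)
  with Cons show ?case
    by (cases p) (simp add: signed_bind_def)
qed (simp add: signed_bind_def)

lemma pm_signs_append [simp]: "pm_signs (F @ G) \<longleftrightarrow> pm_signs F \<and> pm_signs G"
  by (auto simp: pm_signs_def)

lemma pm_signs_map_apsnd [simp]: "pm_signs (map (apsnd g) F) \<longleftrightarrow> pm_signs F"
  by (auto simp: pm_signs_def)

lemma pm_signs_map_negate [simp]:
  fixes F :: "('b::ring_1 \<times> 'a) list"
  shows "pm_signs (map (apfst uminus) F) \<longleftrightarrow> pm_signs F"
proof -
  have "- \<epsilon> = 1 \<or> - \<epsilon> = -1 \<longleftrightarrow> \<epsilon> = 1 \<or> \<epsilon> = (-1::'b)" for \<epsilon>
    by (metis minus_minus)
  then show ?thesis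
    by (simp add: pm_signs_def case_prod_unfold)
qed

lemma pm_signs_signed_bind:
  assumes "pm_signs F" and "\<And>x. x \<in> snd ` set F \<Longrightarrow> pm_signs (G x)"
  shows "pm_signs (signed_bind F G)"
  using assms by (fastforce simp: pm_signs_def signed_bind_def)

lemma args_signed_bind: "snd ` set (signed_bind F G) = (\<Union>x\<in>snd ` set F. snd ` set (G x))"
  by (force simp: signed_bind_def)

lemma args_signed_bind_apsnd:
  "snd ` set (signed_bind F (\<lambda>x. map (apsnd (g x)) L)) = (\<Union>x\<in>snd ` set F. g x ` snd ` set L)"
  by (simp add: args_signed_bind image_image)

lemma length_signed_bind:
  "(\<And>x. length (G x) = k) \<Longrightarrow> length (signed_bind F G) = length F * k"
  by (induction F) (auto simp: signed_bind_def)

definition ewp_bound :: "('a \<Rightarrow> 'a::field) \<Rightarrow> nat \<Rightarrow> bool" where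
  "ewp_bound f N \<longleftrightarrow> (\<forall>y. \<exists>a \<epsilon>. (\<forall>i<N. a i \<noteq> 0 \<and> (\<epsilon> i = 1 \<or> \<epsilon> i = -1)) \<and>
                         y = (\<Sum>i<N. \<epsilon> i * f (a i)))"

lemma ewp_bound_pos: "ewp_bound f N \<Longrightarrow> N > 0"
  unfolding ewp_bound_def by (cases N) (auto dest: spec[of _ 1])

lemma ewp_bound_inverse:
  assumes "ewp_bound f N"
  shows "ewp_bound (\<lambda>x. f (inverse x)) N"
  unfolding ewp_bound_def
proof
  fix y
  obtain a \<epsilon> where "\<forall>i<N. a i \<noteq> 0 \<and> (\<epsilon> i = 1 \<or> \<epsilon> i = -1)" "y = (\<Sum>i<N. \<epsilon> i * f (a i))"
    using assms unfolding ewp_bound_def by blast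
  then show "\<exists>a \<epsilon>. (\<forall>i<N. a i \<noteq> 0 \<and> (\<epsilon> i = 1 \<or> \<epsilon> i = -1)) \<and>
                    y = (\<Sum>i<N. \<epsilon> i * f (inverse (a i)))"
    by (intro exI[of _ "\<lambda>i. inverse (a i)"] exI[of _ \<epsilon>]) simp
qed

lemma ewp_boundI:
  assumes "\<And>y. \<exists>F. length F = N \<and> pm_signs F \<and> 0 \<notin> snd ` set F \<and> y = signed_sum f F"
  shows "ewp_bound f N"
  unfolding ewp_bound_def
proof
  fix y
  obtain F where F: "length F = N" "pm_signs F" "0 \<notin> snd ` set F" "y = signed_sum f F"
    using assms by blast
  have "\<forall>i<N. snd (F ! i) \<noteq> 0 \<and> (fst (F ! i) = 1 \<or> fst (F ! i) = -1)"
    using F(1-3) nth_mem unfolding pm_signs_def by fastforce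
  moreover have "y = (\<Sum>i<N. fst (F ! i) * f (snd (F ! i)))"
    using F(1,4) by (simp add: signed_sum_def sum_list_sum_nth atLeast0LessThan case_prod_unfold)
  ultimately show "\<exists>a \<epsilon>. (\<forall>i<N. a i \<noteq> 0 \<and> (\<epsilon> i = 1 \<or> \<epsilon> i = -1)) \<and>
                    y = (\<Sum>i<N. \<epsilon> i * f (a i))"
    by (intro exI[of _ "\<lambda>i. snd (F ! i)"] exI[of _ "\<lambda>i. fst (F ! i)"] conjI)
qed

text \<open>y is the difference of the values at x and x - y/a; a parameter x with both outside Z
  exists because a field of characteristic 0 is infinite.\<close>

lemma ewp_bound_of_affine:
  fixes f :: "'a \<Rightarrow> 'a::field_char_0"
  assumes affine: "\<And>x. signed_sum f (G x) = a * x + b" and "a \<noteq> 0"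
    and len: "\<And>x. length (G x) = k" and signs: "\<And>x. pm_signs (G x)"
    and "finite Z" and nonzero: "\<And>x. x \<notin> Z \<Longrightarrow> 0 \<notin> snd ` set (G x)"
  shows "ewp_bound f (2 * k)"
proof (rule ewp_boundI)
  fix y
  have "finite (Z \<union> (\<lambda>z. z + y / a) ` Z)"
    using \<open>finite Z\<close> by simp
  then obtain x where x: "x \<notin> Z \<union> (\<lambda>z. z + y / a) ` Z"
    using ex_new_if_finite[OF infinite_UNIV_char_0] by blast
  define x' where "x' = x - y / a"
  have "x' \<notin> Z"
  proof
    assume "x' \<in> Z"
    then have "x \<in> (\<lambda>z. z + y / a) ` Z"
      by (rule rev_image_eqI) (simp add: x'_def)
    with x show False
      by blast
  qed
  define F where "F = G x @ map (apfst uminus) (G x')"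
  have "y = signed_sum f F"
    using \<open>a \<noteq> 0\<close> by (simp add: F_def signed_sum_map_negate affine x'_def algebra_simps)
  moreover have "length F = 2 * k" "pm_signs F"
    using len signs by (simp_all add: F_def)
  moreover have "0 \<notin> snd ` set F"
    using nonzero[of x] nonzero[OF \<open>x' \<notin> Z\<close>] x by (force simp: F_def)
  ultimately show "\<exists>F. length F = 2 * k \<and> pm_signs F \<and> 0 \<notin> snd ` set F \<and> y = signed_sum f F"
    by blast
qed

lemma laurent_eval_signed_dilations:
  "signed_sum (\<lambda>l. laurent_eval c (l * x)) L =
     (\<Sum>n | c n \<noteq> 0. c n * signed_sum (\<lambda>l. l powi n) L * x powi n)"
  unfolding laurent_eval_def
  by (simp add: power_int_mult_distrib signed_sum_sum mult.assoc signed_sum_mult_left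
      signed_sum_mult_right)

lemma signed_power_sum_product:
  "signed_sum (\<lambda>l. l powi k) (signed_bind L1 (\<lambda>l1. map (apsnd ((*) l1)) L2)) =
     signed_sum (\<lambda>l. l powi k) L1 * signed_sum (\<lambda>l. (l::'a::field) powi k) L2"
  by (simp add: signed_sum_signed_bind signed_sum_map_apsnd power_int_mult_distrib
      signed_sum_mult_left signed_sum_mult_right)

lemma two_power_int_inject:
  assumes "(2::'a::field_char_0) powi m = 2 powi n"
  shows "m = n"
proof -
  have "m = n" if "(2::'a) powi m = 2 powi n" "m \<le> n" for m n
  proof -
    obtain d where d: "n = m + int d"
      using \<open>m \<le> n\<close> zle_iff_zadd by blast
    then have "(2::'a) powi m * 2 ^ d = 2 powi m * 1"
      using that(1) by (simp add: power_int_add)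
    then have "of_nat (2 ^ d) = (of_nat 1 :: 'a)"
      by simp
    then have "d = 0"
      by (simp only: of_nat_eq_iff) simp
    with d show "m = n"
      by simp
  qed
  with assms show ?thesis
    by (metis linorder_le_cases)
qed

text \<open>The signed power sum of this list at k is b^k - b^n with b = 2 or b = 1/2, chosen
  so that b^n = 2^|n| is a positive integer, i.e. a sum of ones.\<close>

definition power_sum_root :: "int \<Rightarrow> ('a::field \<times> 'a) list" where
  "power_sum_root n = (1, 2 powi (if n < 0 then -1 else 1)) # replicate (2 ^ nat \<bar>n\<bar>) (-1, 1)"

lemma signed_power_sum_root_eq_0_iff:
  "signed_sum (\<lambda>l. l powi k) (power_sum_root n) = (0::'a::field_char_0) \<longleftrightarrow> k = n"
proof -
  define s :: int where "s = (if n < 0 then -1 else 1)"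
  have sn: "s * n = int (nat \<bar>n\<bar>)"
    by (simp add: s_def)
  have "(2::'a) powi (s * n) = of_nat (2 ^ nat \<bar>n\<bar>)"
    unfolding sn power_int_of_nat by simp
  then have "signed_sum (\<lambda>l. l powi k) (power_sum_root n) = 2 powi (s * k) - (2::'a) powi (s * n)"
    by (simp add: power_sum_root_def signed_sum_def sum_list_replicate s_def power_int_mult)
  also have "\<dots> = 0 \<longleftrightarrow> s * k = s * n"
    using two_power_int_inject by fastforce
  also have "\<dots> \<longleftrightarrow> k = n"
    by (simp add: s_def)
  finally show ?thesis .
qed

lemma signed_power_sums_vanishing_exactly_on:
  assumes "finite S"
  shows "\<exists>L::('a::field_char_0 \<times> 'a) list. pm_signs L \<and> 0 \<notin> snd ` set L \<and>
           (\<forall>k. signed_sum (\<lambda>l. l powi k) L = 0 \<longleftrightarrow> k \<in> S)"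
  using assms
proof (induction S rule: finite_induct)
  case empty
  show ?case
    by (rule exI[of _ "[(1, 1)]"]) (simp add: pm_signs_def)
next
  case (insert n S)
  then obtain L :: "('a \<times> 'a) list" where L: "pm_signs L" "0 \<notin> snd ` set L"
    "\<forall>k. signed_sum (\<lambda>l. l powi k) L = 0 \<longleftrightarrow> k \<in> S"
    by blast
  have root: "pm_signs (power_sum_root n :: ('a \<times> 'a) list)"
    "0 \<notin> snd ` set (power_sum_root n :: ('a \<times> 'a) list)"
    by (auto simp: power_sum_root_def pm_signs_def)
  show ?case
  proof (intro exI conjI)
    let ?L = "signed_bind (power_sum_root n) (\<lambda>l1. map (apsnd ((*) l1)) L)"
    show "pm_signs ?L"
      using root L by (simp add: pm_signs_signed_bind)
    show "0 \<notin> snd ` set ?L"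
      using root L by (auto simp: args_signed_bind_apsnd image_iff)
    show "\<forall>k. signed_sum (\<lambda>l. l powi k) ?L = 0 \<longleftrightarrow> k \<in> insert n S"
      using L by (simp add: signed_power_sum_product signed_power_sum_root_eq_0_iff)
  qed
qed

lemma laurent_signed_dilations_monomial:
  fixes c :: "int \<Rightarrow> 'a::field_char_0"
  assumes "laurent_poly c" and "c n \<noteq> 0"
  shows "\<exists>L C. C \<noteq> 0 \<and> pm_signs L \<and> 0 \<notin> snd ` set L \<and>
           (\<forall>x. signed_sum (\<lambda>l. laurent_eval c (l * x)) L = C * x powi n)"
proof -
  let ?U = "{m. c m \<noteq> 0}"
  have "finite ?U"
    using assms(1) by (simp add: laurent_poly_def)
  then obtain L :: "('a \<times> 'a) list" where L: "pm_signs L" "0 \<notin> snd ` set L"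
    "\<forall>k. signed_sum (\<lambda>l. l powi k) L = 0 \<longleftrightarrow> k \<in> ?U - {n}"
    using signed_power_sums_vanishing_exactly_on[of "?U - {n}"] by blast
  define C where "C = c n * signed_sum (\<lambda>l. l powi n) L"
  have "signed_sum (\<lambda>l. laurent_eval c (l * x)) L = C * x powi n" for x
  proof -
    have "signed_sum (\<lambda>l. laurent_eval c (l * x)) L =
            (\<Sum>m\<in>?U. c m * signed_sum (\<lambda>l. l powi m) L * x powi m)"
      by (rule laurent_eval_signed_dilations)
    also have "\<dots> = C * x powi n + (\<Sum>m\<in>?U - {n}. c m * signed_sum (\<lambda>l. l powi m) L * x powi m)"
      using \<open>finite ?U\<close> assms(2) by (simp add: sum.remove C_def)
    also have "\<dots> = C * x powi n"
      using L(3) by (simp add: sum.neutral)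
    finally show ?thesis .
  qed
  moreover have "C \<noteq> 0"
    using L(3) assms(2) by (simp add: C_def)
  ultimately show ?thesis
    using L(1,2) by blast
qed

lemma degree_forward_difference_less:
  fixes p :: "'a::field poly"
  assumes "degree p > 0"
  shows "degree (p \<circ>\<^sub>p [:1, 1:] - p) < degree p"
proof -
  let ?q = "p \<circ>\<^sub>p [:1, 1:] - p"
  have deg: "degree (p \<circ>\<^sub>p [:1, 1:]) = degree p"
    by (simp add: degree_pcompose)
  have "coeff ?q (degree p) = 0"
    using lead_coeff_comp[of "[:1, 1:]" p] deg by simp
  moreover have "degree ?q \<le> degree p"
    using degree_diff_le[of "p \<circ>\<^sub>p [:1, 1:]" "degree p" p] deg by simp
  ultimately show ?thesis
    using assms by (metis degree_0 le_neq_implies_less leading_coeff_0_iff)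
qed

text \<open>In characteristic 0 a polynomial with constant forward difference k agrees with the
  line through p(0) of slope k at every natural number, hence everywhere.\<close>

lemma degree_forward_difference_pos:
  fixes p :: "'a::field_char_0 poly"
  assumes "degree p \<ge> 2"
  shows "degree (p \<circ>\<^sub>p [:1, 1:] - p) > 0"
proof (rule ccontr)
  let ?q = "p \<circ>\<^sub>p [:1, 1:] - p"
  assume "\<not> degree ?q > 0"
  define k where "k = coeff ?q 0"
  have k: "poly p (x + 1) - poly p x = k" for x
  proof -
    have "poly ?q x = k"
      using \<open>\<not> degree ?q > 0\<close> by (simp add: k_def poly_altdef)
    then show ?thesis
      by (simp add: poly_pcompose algebra_simps)
  qed
  define r where "r = p - [:poly p 0, k:]"
  have "poly r (of_nat n) = 0" for n
  proof (induction n)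
    case (Suc n)
    then show ?case
      using k[of "of_nat n"] by (simp add: r_def algebra_simps)
  qed (simp add: r_def)
  then have "range (of_nat :: nat \<Rightarrow> 'a) \<subseteq> {x. poly r x = 0}"
    by blast
  moreover have "infinite (range (of_nat :: nat \<Rightarrow> 'a))"
    by (rule range_inj_infinite) (rule inj_of_nat)
  ultimately have "r = 0"
    using poly_roots_finite finite_subset by blast
  then have "degree p \<le> 1"
    using degree_pCons_le[of "poly p 0" "[:k:]"] by (simp add: r_def)
  with assms show False
    by simp
qed

lemma forward_differences_affine:
  fixes p :: "'a::field_char_0 poly"
  assumes "degree p > 0"
  shows "\<exists>M a b. pm_signs M \<and> a \<noteq> 0 \<and> (\<forall>x. signed_sum (\<lambda>s. poly p (x + s)) M = a * x + b)"
  using assms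
proof (induction "degree p" arbitrary: p rule: less_induct)
  case less
  show ?case
  proof (cases "degree p = 1")
    case True
    then have "signed_sum (\<lambda>s. poly p (x + s)) [(1, 0)] = coeff p 1 * x + coeff p 0" for x
      by (simp add: poly_altdef)
    moreover have "coeff p 1 \<noteq> 0"
      using True by (metis leading_coeff_0_iff one_neq_zero degree_0)
    ultimately show ?thesis
      by (intro exI[of _ "[(1, 0)]"]) (auto simp: pm_signs_def)
  next
    case False
    let ?q = "p \<circ>\<^sub>p [:1, 1:] - p"
    have "degree ?q < degree p" "degree ?q > 0"
      using less.prems False
      by (auto intro: degree_forward_difference_less degree_forward_difference_pos)
    then obtain M a b where M: "pm_signs M" "a \<noteq> 0"
      "\<forall>x. signed_sum (\<lambda>s. poly ?q (x + s)) M = a * x + b"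
      using less.hyps by blast
    let ?M = "signed_bind M (\<lambda>s. [(1, s + 1), (-1, s)])"
    have "signed_sum (\<lambda>s. poly p (x + s)) ?M = signed_sum (\<lambda>s. poly ?q (x + s)) M" for x
      by (simp add: signed_sum_signed_bind poly_pcompose algebra_simps)
    moreover have "pm_signs ?M"
      using M(1) by (intro pm_signs_signed_bind) (auto simp: pm_signs_def)
    ultimately show ?thesis
      using M(2,3) by auto
  qed
qed

lemma laurent_ewp_bound_pos_exponent:
  fixes c :: "int \<Rightarrow> 'a::field_char_0"
  assumes "laurent_poly c" and "c n \<noteq> 0" and "n > 0"
  shows "\<exists>N. ewp_bound (laurent_eval c) N"
proof -
  obtain L C where "C \<noteq> 0" and L: "pm_signs L" "0 \<notin> snd ` set L"
    and dilate: "\<And>x. signed_sum (\<lambda>l. laurent_eval c (l * x)) L = C * x powi n"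
    using laurent_signed_dilations_monomial[OF assms(1,2)] by blast
  have monomial: "C * x powi n = poly (monom C (nat n)) x" for x :: 'a
    using \<open>n > 0\<close> by (simp add: poly_monom power_int_def)
  have "degree (monom C (nat n)) > 0"
    using \<open>C \<noteq> 0\<close> \<open>n > 0\<close> by (simp add: degree_monom_eq)
  then obtain M a b where M: "pm_signs M" "a \<noteq> 0"
    and differ: "\<And>x. signed_sum (\<lambda>s. poly (monom C (nat n)) (x + s)) M = a * x + b"
    using forward_differences_affine by blast
  define G where "G x = signed_bind M (\<lambda>s. map (apsnd (\<lambda>l. l * (x + s))) L)" for x
  show ?thesis
  proof (rule exI, rule ewp_bound_of_affine[where G = G and a = a and b = b
        and k = "length M * length L" and Z = "uminus ` snd ` set M"])
    show "signed_sum (laurent_eval c) (G x) = a * x + b" for x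
      by (simp add: G_def signed_sum_signed_bind signed_sum_map_apsnd dilate monomial differ)
    show "length (G x) = length M * length L" for x
      by (simp add: G_def length_signed_bind)
    show "pm_signs (G x)" for x
      using M(1) L(1) by (simp add: G_def pm_signs_signed_bind)
    show "0 \<notin> snd ` set (G x)" if "x \<notin> uminus ` snd ` set M" for x
      using that L(2) by (auto simp: G_def args_signed_bind_apsnd image_iff add_eq_0_iff)
  qed (use M(2) in auto)
qed

lemma laurent_poly_reflect:
  assumes "laurent_poly c"
  shows "laurent_poly (\<lambda>n. c (- n))"
proof -
  have "{n. c (- n) \<noteq> 0} = uminus ` {n. c n \<noteq> 0}"
    by force
  with assms show ?thesis
    by (simp add: laurent_poly_def)
qed

lemma laurent_eval_reflect: "laurent_eval (\<lambda>n. c (- n)) x = laurent_eval c (inverse x)"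
proof -
  have "{n. c (- n) \<noteq> 0} = uminus ` {n. c n \<noteq> 0}"
    by force
  then have "laurent_eval (\<lambda>n. c (- n)) x = (\<Sum>m | c m \<noteq> 0. c m * x powi (- m))"
    by (simp add: laurent_eval_def sum.reindex inj_on_def)
  then show ?thesis
    by (simp add: laurent_eval_def power_int_minus power_int_inverse)
qed

lemma laurent_ewp_bound:
  fixes c :: "int \<Rightarrow> 'a::field_char_0"
  assumes "laurent_poly c" and "laurent_nonconst c"
  shows "\<exists>N. ewp_bound (laurent_eval c) N"
proof -
  obtain n where "n \<noteq> 0" "c n \<noteq> 0"
    using assms(2) by (auto simp: laurent_nonconst_def)
  show ?thesis
  proof (cases "n > 0")
    case True
    then show ?thesis
      using laurent_ewp_bound_pos_exponent[OF assms(1) \<open>c n \<noteq> 0\<close>] by blast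
  next
    case False
    then obtain N where "ewp_bound (laurent_eval (\<lambda>m. c (- m))) N"
      using laurent_ewp_bound_pos_exponent[OF laurent_poly_reflect[OF assms(1)], of "- n"]
        \<open>n \<noteq> 0\<close> \<open>c n \<noteq> 0\<close> by auto
    then have "ewp_bound (\<lambda>x. laurent_eval c (inverse (inverse x))) N"
      unfolding laurent_eval_reflect by (rule ewp_bound_inverse)
    then show ?thesis
      by auto
  qed
qed

theorem theorem3p1:
  fixes c :: "int \<Rightarrow> 'a::field_char_0"
  assumes "laurent_poly c" and "laurent_nonconst c"
  shows "\<exists>N::nat. N > 0 \<and> (\<forall>y::'a. \<exists>a \<epsilon> :: nat \<Rightarrow> 'a.
           (\<forall>i<N. a i \<noteq> 0 \<and> (\<epsilon> i = 1 \<or> \<epsilon> i = -1)) \<and>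
           y = (\<Sum>i<N. \<epsilon> i * laurent_eval c (a i)))"
proof -
  obtain N where "ewp_bound (laurent_eval c) N"
    using laurent_ewp_bound[OF assms] by blast
  then show ?thesis
    using ewp_bound_pos unfolding ewp_bound_def by blast
qed

end
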